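(* Let $\mathcal{H}$ be a real Hilbert space, $A_1:\mathcal{H}\to\mathcal{H}$ monotone and $L$-Lipschitz, and $A_2:\mathcal{H}\rightrightarrows\mathcal{H}$ maximally $\mu$-strongly monotone. Let $\Gamma\subseteq\mathbb{R}_{++}$ be a nonempty closed interval and $T_\gamma:=\mathrm{Id}-J_{\gamma A_1}+J_{\gamma A_2}(2J_{\gamma A_1}-\mathrm{Id})$ for $\gamma\in\Gamma$. Then there exists $\beta\in[0,1)$ such that every $T_\gamma$, $\gamma\in\Gamma$, is a $\beta$-contraction.
   Context: $J_A=(\mathrm{Id}+A)^{-1}$. $A_2$ is $\mu$-strongly monotone if $\langle x-y,u-v\rangle\ge\mu\|x-y\|^2$ for all $(x,u),(y,v)\in\operatorname{gra}A_2$. A $\beta$-contraction satisfies $\|Tx-Ty\|\le\beta\|x-y\|$ for all $x,y$. *)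

theory Defs
  imports "HOL-Analysis.Analysis"
begin

text \<open>Set-valued operators on a real Hilbert space are modelled as functions
  'a => 'a set (A x is the set of values at x; gra A = {(x,u). u in A x}).\<close>

definition monotone_op :: "('a::real_inner \<Rightarrow> 'a set) \<Rightarrow> bool" where
  "monotone_op A \<longleftrightarrow>
     (\<forall>x y u v. u \<in> A x \<longrightarrow> v \<in> A y \<longrightarrow> inner (x - y) (u - v) \<ge> 0)"

definition strongly_monotone_op :: "real \<Rightarrow> ('a::real_inner \<Rightarrow> 'a set) \<Rightarrow> bool" where
  "strongly_monotone_op \<mu> A \<longleftrightarrow>
     (\<forall>x y u v. u \<in> A x \<longrightarrow> v \<in> A y \<longrightarrow> inner (x - y) (u - v) \<ge> \<mu> * (norm (x - y))\<^sup>2)"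

definition maximally_monotone_op :: "('a::real_inner \<Rightarrow> 'a set) \<Rightarrow> bool" where
  "maximally_monotone_op A \<longleftrightarrow> monotone_op A \<and>
     (\<forall>B. monotone_op B \<and> (\<forall>x. A x \<subseteq> B x) \<longrightarrow> B = A)"

text \<open>Resolvent J_{gamma A} = (Id + gamma A)^{-1}; its value at x is the unique p with
  x in p + gamma A p (single-valued and total for maximally monotone A, gamma > 0).\<close>
definition resolvent :: "real \<Rightarrow> ('a::real_inner \<Rightarrow> 'a set) \<Rightarrow> 'a \<Rightarrow> 'a" where
  "resolvent \<gamma> A x = (THE p. x - p \<in> (\<lambda>u. \<gamma> *\<^sub>R u) ` A p)"

definition is_contraction :: "real \<Rightarrow> ('a::real_normed_vector \<Rightarrow> 'a) \<Rightarrow> bool" where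
  "is_contraction \<beta> T \<longleftrightarrow> (\<forall>x y. norm (T x - T y) \<le> \<beta> * norm (x - y))"

end

theory Submission
  imports Defs
begin

text \<open>
  Write p = J_{\<gamma>A1} x and q = J_{\<gamma>A2} (2p - x), so that x = p + \<gamma> A1 p and
  T_\<gamma> x = \<gamma> A1 p + q. For two points x, x' let dp, da, dq be the differences of p, A1 p and q.
  Expanding the square and using the monotonicity of A1 and the strong monotonicity of A2 gives
  |x - x'|^2 >= |T_\<gamma> x - T_\<gamma> x'|^2 + s with s = |dp - dq|^2 + 2\<gamma>\<mu> |dq|^2, while the
  Lipschitz bound |da| <= L |dp| gives |x - x'|^2 <= (1 + \<gamma>L)^2 (2 + 1/(\<gamma>\<mu>)) s. Hence
  |T_\<gamma> x - T_\<gamma> x'|^2 <= (1 - 1/K) |x - x'|^2 for a K that is uniform over \<gamma> in [a, b].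

  The resolvents are total by Minty's theorem, proved via the Fitzpatrick function of a maximally
  monotone A: its epigraph is closed and convex, f + (|x|^2 + |u|^2)/2 attains its minimum there
  by a parallelogram-law argument, and the first-order condition at a minimiser (x0, u0, f0)
  forces u0 = -x0 and -x0 \<in> A x0.
\<close>

lemma maximally_monotone_opI:
  assumes mono: "monotone_op A"
    and ext: "\<And>x u. (\<And>y v. v \<in> A y \<Longrightarrow> 0 \<le> inner (x - y) (u - v)) \<Longrightarrow> u \<in> A x"
  shows "maximally_monotone_op A"
  unfolding maximally_monotone_op_def
proof (intro conjI allI impI mono)
  fix B assume B: "monotone_op B \<and> (\<forall>x. A x \<subseteq> B x)"
  have "B x \<subseteq> A x" for x
    using B unfolding monotone_op_def by (blast intro: ext)
  with B show "B = A" by blast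
qed

lemma maximally_monotone_opD:
  assumes max: "maximally_monotone_op A"
    and related: "\<And>y v. v \<in> A y \<Longrightarrow> 0 \<le> inner (x - y) (u - v)"
  shows "u \<in> A x"
proof -
  define B where "B = A(x := insert u (A x))"
  have "monotone_op A" using max by (simp add: maximally_monotone_op_def)
  moreover have "0 \<le> inner (y - x) (v - u)" if "v \<in> A y" for y v
    using related[OF that] by (simp add: inner_diff_left inner_diff_right)
  ultimately have "monotone_op B"
    using related unfolding monotone_op_def B_def by auto
  moreover have "\<forall>z. A z \<subseteq> B z" by (simp add: B_def subset_insertI)
  ultimately have "B = A" using max by (simp add: maximally_monotone_op_def)
  then show ?thesis by (metis B_def fun_upd_same insertI1)
qed

lemma maximally_monotone_op_shift:
  assumes max: "maximally_monotone_op A"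
  shows "maximally_monotone_op (\<lambda>x. A (x + z))"
proof (rule maximally_monotone_opI)
  have "monotone_op A" using max by (simp add: maximally_monotone_op_def)
  then show "monotone_op (\<lambda>x. A (x + z))"
    unfolding monotone_op_def by (metis add_diff_cancel_right)
next
  fix x u assume "\<And>y v. v \<in> A (y + z) \<Longrightarrow> 0 \<le> inner (x - y) (u - v)"
  then have "0 \<le> inner (x + z - y) (u - v)" if "v \<in> A y" for y v
    using that by (metis add_diff_cancel_right diff_add_cancel)
  then show "u \<in> A (x + z)" by (rule maximally_monotone_opD[OF max])
qed

lemma maximally_monotone_op_scaleR:
  assumes max: "maximally_monotone_op A" and "0 < c"
  shows "maximally_monotone_op (\<lambda>x. (\<lambda>u. c *\<^sub>R u) ` A x)"
proof (rule maximally_monotone_opI)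
  have "monotone_op A" using max by (simp add: maximally_monotone_op_def)
  with \<open>0 < c\<close> show "monotone_op (\<lambda>x. (\<lambda>u. c *\<^sub>R u) ` A x)"
    unfolding monotone_op_def by (auto simp flip: scaleR_diff_right)
next
  fix x u assume related: "\<And>y v. v \<in> (\<lambda>u. c *\<^sub>R u) ` A y \<Longrightarrow> 0 \<le> inner (x - y) (u - v)"
  have "0 \<le> inner (x - y) (u /\<^sub>R c - v)" if "v \<in> A y" for y v
  proof -
    have "0 \<le> inner (x - y) (u - c *\<^sub>R v)" using that by (intro related) auto
    also have "u - c *\<^sub>R v = c *\<^sub>R (u /\<^sub>R c - v)" using \<open>0 < c\<close> by (simp add: algebra_simps)
    finally show ?thesis using \<open>0 < c\<close> by (simp add: zero_le_mult_iff)
  qed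
  then have "u /\<^sub>R c \<in> A x" by (rule maximally_monotone_opD[OF max])
  then show "u \<in> (\<lambda>u. c *\<^sub>R u) ` A x"
    using \<open>0 < c\<close> by (auto intro!: image_eqI[of _ _ "u /\<^sub>R c"])
qed

lemma monotone_op_id_plus_inj:
  assumes "monotone_op A" and "z - p \<in> A p" and "z - q \<in> A q"
  shows "p = q"
proof -
  have "0 \<le> inner (p - q) ((z - p) - (z - q))"
    using assms unfolding monotone_op_def by blast
  then have "inner (p - q) (p - q) \<le> 0"
    by (simp add: inner_diff_right inner_diff_left inner_commute)
  then show ?thesis by (metis eq_iff_diff_eq_0 inner_gt_zero_iff not_less)
qed

lemma continuous_monotone_imp_maximally_monotone:
  fixes F :: "'a::real_inner \<Rightarrow> 'a"
  assumes mono: "monotone_op (\<lambda>x. {F x})" and cont: "continuous_on UNIV F"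
  shows "maximally_monotone_op (\<lambda>x. {F x})"
proof (rule maximally_monotone_opI[OF mono])
  fix x u assume related: "\<And>y v. v \<in> {F y} \<Longrightarrow> 0 \<le> inner (x - y) (u - v)"
  define w where "w = u - F x"
  have "inner w (u - F (x + t *\<^sub>R w)) \<le> 0" if "0 < t" for t :: real
  proof -
    have "0 \<le> inner (x - (x + t *\<^sub>R w)) (u - F (x + t *\<^sub>R w))" by (rule related) simp
    with that show ?thesis by (simp add: mult_le_0_iff)
  qed
  then have ev: "\<forall>\<^sub>F t in at_right 0. inner w (u - F (x + t *\<^sub>R w)) \<le> 0"
    by (metis (mono_tags) eventually_at_right_less eventually_mono)
  have lim: "((\<lambda>t. inner w (u - F (x + t *\<^sub>R w))) \<longlongrightarrow> inner w (u - F x)) (at_right 0)"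
    by (intro tendsto_intros continuous_on_tendsto_compose[OF cont]) (auto intro!: tendsto_eq_intros)
  have "inner w w \<le> 0"
    using tendsto_upperbound[OF lim ev trivial_limit_at_right_real] by (simp only: w_def)
  then have "w = 0" by (metis inner_gt_zero_iff not_less)
  then show "u \<in> {F x}" by (simp add: w_def)
qed

lemma Cauchy_if_dist_le_null:
  fixes X :: "nat \<Rightarrow> 'a::metric_space"
  assumes dist_le: "\<And>m n. dist (X m) (X n) \<le> e m + e n" and null: "e \<longlonglongrightarrow> 0"
  shows "Cauchy X"
proof (rule metric_CauchyI)
  fix \<epsilon> :: real assume "0 < \<epsilon>"
  then obtain N where N: "\<And>n. N \<le> n \<Longrightarrow> norm (e n - 0) < \<epsilon> / 2"
    using LIMSEQ_D[OF null, of "\<epsilon> / 2"] by auto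
  have "dist (X m) (X n) < \<epsilon>" if "N \<le> m" "N \<le> n" for m n
    using dist_le[of m n] N[OF that(1)] N[OF that(2)] by simp
  then show "\<exists>M. \<forall>m\<ge>M. \<forall>n\<ge>M. dist (X m) (X n) < \<epsilon>" by blast
qed

lemma nonneg_if_quadratic_perturbation_nonneg:
  fixes a D :: real
  assumes "0 \<le> D" and perturb: "\<And>t. 0 < t \<Longrightarrow> t \<le> 1 \<Longrightarrow> 0 \<le> t * a + t\<^sup>2 * D"
  shows "0 \<le> a"
proof (rule ccontr)
  assume "\<not> 0 \<le> a"
  define t where "t = min 1 (- a / (2 * (D + 1)))"
  have t: "0 < t" "t \<le> 1" using \<open>\<not> 0 \<le> a\<close> \<open>0 \<le> D\<close> by (auto simp: t_def field_simps)
  have "t * D \<le> - a / (2 * (D + 1)) * D" unfolding t_def using \<open>0 \<le> D\<close> by (intro mult_right_mono) auto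
  also have "\<dots> < - a"
    using \<open>\<not> 0 \<le> a\<close> \<open>0 \<le> D\<close> mult_nonneg_nonpos[of D a] by (simp add: field_simps)
  finally have "t * (a + t * D) < 0" using t by (simp add: mult_pos_neg)
  with perturb[OF t] show False by (simp add: algebra_simps power2_eq_square)
qed

lemma norm_add_scaleR_sq:
  fixes x d :: "'a::real_inner"
  shows "(norm (x + t *\<^sub>R d))\<^sup>2 = (norm x)\<^sup>2 + 2 * t * inner x d + t\<^sup>2 * (norm d)\<^sup>2"
  unfolding power2_norm_eq_inner
  by (simp add: inner_add_left inner_add_right inner_commute[of d x] power2_eq_square algebra_simps)

lemma minimizing_sequence_Cauchy:
  fixes E :: "('a::real_inner \<times> real) set"
  assumes "convex E"
    and lower: "\<And>z f. (z, f) \<in> E \<Longrightarrow> m \<le> f + (norm z)\<^sup>2 / 2"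
    and seq: "\<And>n. (Z n, F n) \<in> E"
    and small: "\<And>n. F n + (norm (Z n))\<^sup>2 / 2 \<le> m + (\<delta> n)\<^sup>2"
    and "\<delta> \<longlonglongrightarrow> 0" "\<And>n. 0 \<le> \<delta> n"
  shows "Cauchy Z"
proof -
  have sq_dist: "(norm (Z n - Z k))\<^sup>2 \<le> (2 * \<delta> n + 2 * \<delta> k)\<^sup>2" for n k
  proof -
    have "((1/2) *\<^sub>R (Z n + Z k), (F n + F k) / 2) \<in> E"
      using convexD[OF \<open>convex E\<close> seq[of n] seq[of k], of "1/2" "1/2"]
      by (simp add: scaleR_add_right add_divide_distrib)
    then have "m \<le> (F n + F k) / 2 + (norm ((1/2) *\<^sub>R (Z n + Z k)))\<^sup>2 / 2" by (rule lower)
    also have "\<dots> = (F n + (norm (Z n))\<^sup>2 / 2 + F k + (norm (Z k))\<^sup>2 / 2) / 2 - (norm (Z n - Z k))\<^sup>2 / 8"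
      unfolding power2_norm_eq_inner
      by (simp add: inner_add_left inner_add_right inner_diff_left inner_diff_right
          inner_commute[of "Z k" "Z n"] field_simps)
    finally have "(norm (Z n - Z k))\<^sup>2 \<le> 4 * ((\<delta> n)\<^sup>2 + (\<delta> k)\<^sup>2)"
      using small[of n] small[of k] by argo
    also have "\<dots> \<le> (2 * \<delta> n + 2 * \<delta> k)\<^sup>2"
      using \<open>0 \<le> \<delta> n\<close> \<open>0 \<le> \<delta> k\<close> by (simp add: power2_sum)
    finally show ?thesis .
  qed
  have "dist (Z n) (Z k) \<le> 2 * \<delta> n + 2 * \<delta> k" for n k
    unfolding dist_norm by (rule power2_le_imp_le[OF sq_dist]) (simp add: \<open>\<And>n. 0 \<le> \<delta> n\<close>)
  moreover have "(\<lambda>n. 2 * \<delta> n) \<longlonglongrightarrow> 0"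
    using tendsto_mult_left_zero[OF \<open>\<delta> \<longlonglongrightarrow> 0\<close>, of 2] by simp
  ultimately show "Cauchy Z" by (rule Cauchy_if_dist_le_null)
qed

lemma closed_convex_attains_min_snd_plus_half_norm_sq:
  fixes E :: "('a::{real_inner,complete_space} \<times> real) set"
  assumes "closed E" "convex E" "E \<noteq> {}"
    and bdd: "bdd_below ((\<lambda>(z, f). f + (norm z)\<^sup>2 / 2) ` E)"
  shows "\<exists>(z0, f0)\<in>E. \<forall>(z, f)\<in>E. f0 + (norm z0)\<^sup>2 / 2 \<le> f + (norm z)\<^sup>2 / 2"
proof -
  define m where "m = Inf ((\<lambda>(z, f). f + (norm z)\<^sup>2 / 2) ` E)"
  have lower: "m \<le> f + (norm z)\<^sup>2 / 2" if "(z, f) \<in> E" for z f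
    unfolding m_def using bdd that by (auto intro: cInf_lower)
  define \<delta> where "\<delta> n = 1 / real (Suc n)" for n
  have \<delta>: "\<delta> \<longlonglongrightarrow> 0" "0 \<le> \<delta> n" for n
    unfolding \<delta>_def using LIMSEQ_Suc[OF lim_const_over_n[of 1]] by simp_all
  have "\<exists>z f. (z, f) \<in> E \<and> f + (norm z)\<^sup>2 / 2 < m + (\<delta> n)\<^sup>2" for n
  proof -
    have "Inf ((\<lambda>(z, f). f + (norm z)\<^sup>2 / 2) ` E) < m + (\<delta> n)\<^sup>2" by (simp add: m_def \<delta>_def)
    with \<open>E \<noteq> {}\<close> obtain c where "c \<in> (\<lambda>(z, f). f + (norm z)\<^sup>2 / 2) ` E" "c < m + (\<delta> n)\<^sup>2"
      by (meson cInf_lessD image_is_empty)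
    then show ?thesis by auto
  qed
  then obtain Z F where seq: "\<And>n. (Z n, F n) \<in> E"
    and small: "\<And>n. F n + (norm (Z n))\<^sup>2 / 2 < m + (\<delta> n)\<^sup>2"
    by metis
  have "Cauchy Z"
    by (rule minimizing_sequence_Cauchy[OF \<open>convex E\<close> lower seq less_imp_le[OF small] \<delta>])
  then obtain z0 where z0: "Z \<longlonglongrightarrow> z0" using Cauchy_convergent_iff convergent_def by blast
  have "(\<lambda>n. F n + (norm (Z n))\<^sup>2 / 2) \<longlonglongrightarrow> m"
  proof (rule tendsto_sandwich)
    show "\<forall>\<^sub>F n in sequentially. m \<le> F n + (norm (Z n))\<^sup>2 / 2" using lower seq by simp
    show "\<forall>\<^sub>F n in sequentially. F n + (norm (Z n))\<^sup>2 / 2 \<le> m + (\<delta> n)\<^sup>2"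
      using small by (simp add: less_imp_le)
    show "(\<lambda>n. m + (\<delta> n)\<^sup>2) \<longlonglongrightarrow> m"
      using tendsto_add[OF tendsto_const tendsto_power[OF \<delta>(1), of 2]] by simp
  qed simp
  moreover have "(\<lambda>n. (norm (Z n))\<^sup>2 / 2) \<longlonglongrightarrow> (norm z0)\<^sup>2 / 2"
    using z0 by (auto intro!: tendsto_intros)
  ultimately have "F \<longlonglongrightarrow> m - (norm z0)\<^sup>2 / 2"
    using tendsto_diff by fastforce
  with z0 have "(\<lambda>n. (Z n, F n)) \<longlonglongrightarrow> (z0, m - (norm z0)\<^sup>2 / 2)" by (rule tendsto_Pair)
  with \<open>closed E\<close> seq have "(z0, m - (norm z0)\<^sup>2 / 2) \<in> E" by (rule closed_sequentially)
  moreover have "\<forall>(z, f)\<in>E. m - (norm z0)\<^sup>2 / 2 + (norm z0)\<^sup>2 / 2 \<le> f + (norm z)\<^sup>2 / 2"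
    using lower by auto
  ultimately show ?thesis by blast
qed

lemma min_snd_plus_half_norm_sq_variational_ineq:
  fixes E :: "('a::real_inner \<times> real) set"
  assumes "convex E" and "(z0, f0) \<in> E"
    and min: "\<forall>(z, f)\<in>E. f0 + (norm z0)\<^sup>2 / 2 \<le> f + (norm z)\<^sup>2 / 2"
    and "(z, f) \<in> E"
  shows "0 \<le> f - f0 + inner z0 (z - z0)"
proof (rule nonneg_if_quadratic_perturbation_nonneg)
  show "0 \<le> (norm (z - z0))\<^sup>2 / 2" by simp
  fix t :: real assume "0 < t" "t \<le> 1"
  then have "(1 - t) *\<^sub>R (z0, f0) + t *\<^sub>R (z, f) \<in> E"
    using assms by (intro convexD) auto
  moreover have "(1 - t) *\<^sub>R (z0, f0) + t *\<^sub>R (z, f) = (z0 + t *\<^sub>R (z - z0), f0 + t * (f - f0))"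
    by (simp add: algebra_simps)
  ultimately have "f0 + (norm z0)\<^sup>2 / 2 \<le> f0 + t * (f - f0) + (norm (z0 + t *\<^sub>R (z - z0)))\<^sup>2 / 2"
    using min by fastforce
  then show "0 \<le> t * (f - f0 + inner z0 (z - z0)) + t\<^sup>2 * ((norm (z - z0))\<^sup>2 / 2)"
    using norm_add_scaleR_sq[of z0 t "z - z0"] by (simp add: algebra_simps add_divide_distrib)
qed

definition fitzpatrick_epigraph :: "('a::real_inner \<Rightarrow> 'a set) \<Rightarrow> (('a \<times> 'a) \<times> real) set" where
  "fitzpatrick_epigraph A = {((x, u), f). \<forall>y. \<forall>v\<in>A y. inner x v + inner y u - inner y v \<le> f}"

lemma fitzpatrick_epigraph_eq_Inter_halfspaces:
  "fitzpatrick_epigraph A = (\<Inter>(y, v)\<in>{(y, v). v \<in> A y}. {p. inner ((v, y), -1) p \<le> inner y v})"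
  by (fastforce simp: fitzpatrick_epigraph_def inner_commute)

lemma closed_fitzpatrick_epigraph: "closed (fitzpatrick_epigraph A)"
  unfolding fitzpatrick_epigraph_eq_Inter_halfspaces by (auto intro!: closed_INT closed_halfspace_le)

lemma convex_fitzpatrick_epigraph: "convex (fitzpatrick_epigraph A)"
  unfolding fitzpatrick_epigraph_eq_Inter_halfspaces by (auto intro!: convex_INT convex_halfspace_le)

lemma graph_in_fitzpatrick_epigraph:
  assumes "monotone_op A" and "v \<in> A y"
  shows "((y, v), inner y v) \<in> fitzpatrick_epigraph A"
proof -
  have "inner y v' + inner y' v - inner y' v' \<le> inner y v" if "v' \<in> A y'" for y' v'
    using assms that unfolding monotone_op_def
    by (fastforce simp: inner_diff_left inner_diff_right inner_commute)
  then show ?thesis by (simp add: fitzpatrick_epigraph_def)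
qed

lemma inner_le_fitzpatrick_epigraph:
  assumes max: "maximally_monotone_op A" and epi: "((x, u), f) \<in> fitzpatrick_epigraph A"
  shows "inner x u \<le> f"
proof (rule ccontr)
  assume "\<not> inner x u \<le> f"
  have bound: "inner x v + inner y u - inner y v \<le> f" if "v \<in> A y" for y v
    using epi that by (simp add: fitzpatrick_epigraph_def)
  have "u \<in> A x"
  proof (rule maximally_monotone_opD[OF max])
    fix y v assume "v \<in> A y"
    with bound \<open>\<not> inner x u \<le> f\<close> show "0 \<le> inner (x - y) (u - v)"
      by (force simp: inner_diff_left inner_diff_right inner_commute)
  qed
  with bound[of u x] \<open>\<not> inner x u \<le> f\<close> show False by simp
qed

lemma bdd_below_fitzpatrick_epigraph:
  assumes "maximally_monotone_op A"
  shows "bdd_below ((\<lambda>(z, f). f + (norm z)\<^sup>2 / 2) ` fitzpatrick_epigraph A)"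
proof (rule bdd_belowI)
  fix c assume "c \<in> (\<lambda>(z, f). f + (norm z)\<^sup>2 / 2) ` fitzpatrick_epigraph A"
  then obtain x u f where epi: "((x, u), f) \<in> fitzpatrick_epigraph A" and c: "c = f + (norm (x, u))\<^sup>2 / 2"
    by auto
  have "0 \<le> (norm (x + u))\<^sup>2 / 2" by simp
  also have "\<dots> = inner x u + (norm (x, u))\<^sup>2 / 2"
    unfolding power2_norm_eq_inner by (simp add: inner_add_left inner_add_right inner_commute[of u x])
  also have "\<dots> \<le> c"
    using inner_le_fitzpatrick_epigraph[OF assms epi] c by simp
  finally show "0 \<le> c" .
qed

lemma minty_theorem_zero:
  fixes A :: "'a::{real_inner,complete_space} \<Rightarrow> 'a set"
  assumes max: "maximally_monotone_op A"
  shows "\<exists>x. - x \<in> A x"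
proof -
  define E where "E = fitzpatrick_epigraph A"
  have mono: "monotone_op A" using max by (simp add: maximally_monotone_op_def)
  obtain y v where "v \<in> A y"
    using maximally_monotone_opD[OF max, of 0 0] by blast
  then have "E \<noteq> {}" using graph_in_fitzpatrick_epigraph[OF mono] by (auto simp: E_def)
  then obtain x0 u0 f0 where min: "((x0, u0), f0) \<in> E"
    "\<forall>(z, f)\<in>E. f0 + (norm (x0, u0))\<^sup>2 / 2 \<le> f + (norm z)\<^sup>2 / 2"
    using closed_convex_attains_min_snd_plus_half_norm_sq[of E] bdd_below_fitzpatrick_epigraph[OF max]
      closed_fitzpatrick_epigraph convex_fitzpatrick_epigraph
    unfolding E_def by fastforce
  have key: "(norm (x0 + u0))\<^sup>2 \<le> inner (y + u0) (v + x0)" if "v \<in> A y" for y v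
  proof -
    have "((y, v), inner y v) \<in> E" using graph_in_fitzpatrick_epigraph[OF mono that] by (simp add: E_def)
    from min_snd_plus_half_norm_sq_variational_ineq[OF convex_fitzpatrick_epigraph min[unfolded E_def] this[unfolded E_def]]
    have "0 \<le> inner y v - f0 + inner x0 (y - x0) + inner u0 (v - u0)" by simp
    moreover have "inner x0 u0 \<le> f0" using inner_le_fitzpatrick_epigraph[OF max] min(1) by (simp add: E_def)
    ultimately show ?thesis
      unfolding power2_norm_eq_inner
      by (simp add: inner_add_left inner_add_right inner_diff_right inner_commute algebra_simps)
  qed
  have "- x0 \<in> A (- u0)"
  proof (rule maximally_monotone_opD[OF max])
    fix y v assume "v \<in> A y"
    with key have "0 \<le> inner (y + u0) (v + x0)" by (meson order_trans zero_le_power2)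
    then show "0 \<le> inner (- u0 - y) (- x0 - v)"
      by (simp add: inner_diff_left inner_diff_right inner_add_left inner_add_right)
  qed
  from key[OF this] have "u0 = - x0" by (simp add: add_eq_0_iff)
  with \<open>- x0 \<in> A (- u0)\<close> show ?thesis by auto
qed

theorem minty_theorem:
  fixes A :: "'a::{real_inner,complete_space} \<Rightarrow> 'a set"
  assumes "maximally_monotone_op A"
  shows "\<exists>p. z - p \<in> A p"
proof -
  obtain x where "- x \<in> A (x + z)"
    using minty_theorem_zero[OF maximally_monotone_op_shift[OF assms]] by blast
  then have "z - (x + z) \<in> A (x + z)" by simp
  then show ?thesis by blast
qed

lemma resolvent_mem:
  fixes A :: "'a::{real_inner,complete_space} \<Rightarrow> 'a set"
  assumes max: "maximally_monotone_op A" and "0 < \<gamma>"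
  shows "z - resolvent \<gamma> A z \<in> (\<lambda>u. \<gamma> *\<^sub>R u) ` A (resolvent \<gamma> A z)"
proof -
  have max_scaled: "maximally_monotone_op (\<lambda>x. (\<lambda>u. \<gamma> *\<^sub>R u) ` A x)"
    using maximally_monotone_op_scaleR[OF max \<open>0 < \<gamma>\<close>] .
  then obtain p where p: "z - p \<in> (\<lambda>u. \<gamma> *\<^sub>R u) ` A p"
    using minty_theorem by blast
  have "resolvent \<gamma> A z = p"
    unfolding resolvent_def
  proof (rule the_equality)
    show "z - p \<in> (\<lambda>u. \<gamma> *\<^sub>R u) ` A p" by (rule p)
  next
    fix q assume "z - q \<in> (\<lambda>u. \<gamma> *\<^sub>R u) ` A q"
    with p max_scaled show "q = p"
      using monotone_op_id_plus_inj by (metis maximally_monotone_op_def)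
  qed
  with p show ?thesis by simp
qed

definition douglas_rachford_op :: "real \<Rightarrow> ('a::real_inner \<Rightarrow> 'a set) \<Rightarrow> ('a \<Rightarrow> 'a set) \<Rightarrow> 'a \<Rightarrow> 'a" where
  "douglas_rachford_op \<gamma> A B x = x - resolvent \<gamma> A x + resolvent \<gamma> B (2 *\<^sub>R resolvent \<gamma> A x - x)"

lemma douglas_rachford_difference_estimate:
  fixes dp da dq :: "'a::real_inner"
  assumes "0 < \<gamma>" "0 < \<mu>" "0 \<le> L"
    and mono: "0 \<le> inner dp da" and lip: "norm da \<le> L * norm dp"
    and strong: "\<gamma> * \<mu> * (norm dq)\<^sup>2 \<le> inner dq (dp - \<gamma> *\<^sub>R da - dq)"
    and K: "(1 + \<gamma> * L)\<^sup>2 * (2 + 1 / (\<gamma> * \<mu>)) \<le> K"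
  shows "(norm (\<gamma> *\<^sub>R da + dq))\<^sup>2 \<le> (1 - 1 / K) * (norm (dp + \<gamma> *\<^sub>R da))\<^sup>2"
proof -
  define s where "s = (norm (dp - dq))\<^sup>2 + 2 * \<gamma> * \<mu> * (norm dq)\<^sup>2"
  have "(norm (dp + \<gamma> *\<^sub>R da))\<^sup>2 = (norm (\<gamma> *\<^sub>R da + dq))\<^sup>2 + (norm (dp - dq))\<^sup>2
      + 2 * inner dq (dp - \<gamma> *\<^sub>R da - dq) + 2 * \<gamma> * inner dp da"
    unfolding power2_norm_eq_inner
    by (simp add: inner_add_left inner_add_right inner_diff_left inner_diff_right inner_commute algebra_simps)
  moreover have "0 \<le> \<gamma> * inner dp da" using \<open>0 < \<gamma>\<close> mono by simp
  ultimately have decrease: "(norm (\<gamma> *\<^sub>R da + dq))\<^sup>2 + s \<le> (norm (dp + \<gamma> *\<^sub>R da))\<^sup>2"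
    using strong unfolding s_def by linarith
  have "(norm dp)\<^sup>2 + (norm (dp - 2 *\<^sub>R dq))\<^sup>2 = 2 * (norm (dp - dq))\<^sup>2 + 2 * (norm dq)\<^sup>2"
    unfolding power2_norm_eq_inner
    by (simp add: inner_diff_left inner_diff_right inner_commute algebra_simps)
  then have "(norm dp)\<^sup>2 \<le> 2 * (norm (dp - dq))\<^sup>2 + 2 * (norm dq)\<^sup>2"
    by (metis le_add_same_cancel1 zero_le_power2)
  also have "\<dots> \<le> (2 + 1 / (\<gamma> * \<mu>)) * s"
    using \<open>0 < \<gamma>\<close> \<open>0 < \<mu>\<close> by (simp add: s_def field_simps)
  finally have dp_le: "(norm dp)\<^sup>2 \<le> (2 + 1 / (\<gamma> * \<mu>)) * s" .
  have "norm (dp + \<gamma> *\<^sub>R da) \<le> norm dp + \<gamma> * norm da"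
    using norm_triangle_ineq[of dp "\<gamma> *\<^sub>R da"] \<open>0 < \<gamma>\<close> by simp
  also have "\<dots> \<le> (1 + \<gamma> * L) * norm dp"
    using lip \<open>0 < \<gamma>\<close> by (simp add: algebra_simps mult_left_mono)
  finally have "(norm (dp + \<gamma> *\<^sub>R da))\<^sup>2 \<le> (1 + \<gamma> * L)\<^sup>2 * (norm dp)\<^sup>2"
    by (metis norm_ge_zero power_mono power_mult_distrib)
  also have "\<dots> \<le> (1 + \<gamma> * L)\<^sup>2 * (2 + 1 / (\<gamma> * \<mu>)) * s"
    using dp_le by (simp add: mult_left_mono mult.assoc)
  also have "\<dots> \<le> K * s"
    using K s_def \<open>0 < \<gamma>\<close> \<open>0 < \<mu>\<close> by (intro mult_right_mono) auto
  finally have "(norm (dp + \<gamma> *\<^sub>R da))\<^sup>2 \<le> K * s" .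
  moreover have "1 \<le> K"
  proof -
    have "1 * 1 \<le> (1 + \<gamma> * L)\<^sup>2 * (2 + 1 / (\<gamma> * \<mu>))"
      using \<open>0 < \<gamma>\<close> \<open>0 < \<mu>\<close> \<open>0 \<le> L\<close> by (intro mult_mono) (auto simp: one_le_power)
    with K show ?thesis by simp
  qed
  ultimately have "(norm (dp + \<gamma> *\<^sub>R da))\<^sup>2 / K \<le> s" by (simp add: divide_le_eq mult.commute)
  with decrease show ?thesis by (simp add: left_diff_distrib)
qed

lemma douglas_rachford_op_decomposition:
  fixes F :: "'a::{real_inner,complete_space} \<Rightarrow> 'a"
  assumes maxF: "maximally_monotone_op (\<lambda>x. {F x})" and maxB: "maximally_monotone_op B" and "0 < \<gamma>"
  obtains p q w where "x = p + \<gamma> *\<^sub>R F p" and "w \<in> B q" and "\<gamma> *\<^sub>R w = p - \<gamma> *\<^sub>R F p - q"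
    and "douglas_rachford_op \<gamma> (\<lambda>x. {F x}) B x = \<gamma> *\<^sub>R F p + q"
proof -
  define p where "p = resolvent \<gamma> (\<lambda>x. {F x}) x"
  define q where "q = resolvent \<gamma> B (2 *\<^sub>R p - x)"
  have "x - p = \<gamma> *\<^sub>R F p"
    using resolvent_mem[OF maxF \<open>0 < \<gamma>\<close>, of x] by (auto simp: p_def)
  moreover obtain w where "w \<in> B q" "2 *\<^sub>R p - x - q = \<gamma> *\<^sub>R w"
    using resolvent_mem[OF maxB \<open>0 < \<gamma>\<close>] unfolding q_def by blast
  moreover have "douglas_rachford_op \<gamma> (\<lambda>x. {F x}) B x = x - p + q"
    by (simp add: douglas_rachford_op_def p_def q_def)
  ultimately show thesis
    by (intro that[where p = p and q = q and w = w]) (auto simp: scaleR_2 algebra_simps)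
qed

lemma douglas_rachford_op_contraction:
  fixes F :: "'a::{real_inner,complete_space} \<Rightarrow> 'a" and B :: "'a \<Rightarrow> 'a set"
  assumes mono: "monotone_op (\<lambda>x. {F x})" and lip: "L-lipschitz_on UNIV F"
    and maxB: "maximally_monotone_op B" and strong: "strongly_monotone_op \<mu> B"
    and "0 < \<mu>" "0 < \<gamma>" and K: "(1 + \<gamma> * L)\<^sup>2 * (2 + 1 / (\<gamma> * \<mu>)) \<le> K"
  shows "is_contraction (sqrt (1 - 1 / K)) (douglas_rachford_op \<gamma> (\<lambda>x. {F x}) B)"
  unfolding is_contraction_def
proof (intro allI)
  fix x x' :: 'a
  have maxF: "maximally_monotone_op (\<lambda>x. {F x})"
    using continuous_monotone_imp_maximally_monotone[OF mono lipschitz_on_continuous_on[OF lip]] .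
  obtain p q w where x: "x = p + \<gamma> *\<^sub>R F p" and "w \<in> B q" and w: "\<gamma> *\<^sub>R w = p - \<gamma> *\<^sub>R F p - q"
    and Tx: "douglas_rachford_op \<gamma> (\<lambda>x. {F x}) B x = \<gamma> *\<^sub>R F p + q"
    using douglas_rachford_op_decomposition[OF maxF maxB \<open>0 < \<gamma>\<close>] .
  obtain p' q' w' where x': "x' = p' + \<gamma> *\<^sub>R F p'" and "w' \<in> B q'" and w': "\<gamma> *\<^sub>R w' = p' - \<gamma> *\<^sub>R F p' - q'"
    and Tx': "douglas_rachford_op \<gamma> (\<lambda>x. {F x}) B x' = \<gamma> *\<^sub>R F p' + q'"
    using douglas_rachford_op_decomposition[OF maxF maxB \<open>0 < \<gamma>\<close>] .
  have dw: "\<gamma> *\<^sub>R (w - w') = (p - p') - \<gamma> *\<^sub>R (F p - F p') - (q - q')"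
    using w w' by (simp add: scaleR_diff_right algebra_simps)
  have "\<mu> * (norm (q - q'))\<^sup>2 \<le> inner (q - q') (w - w')"
    using strong \<open>w \<in> B q\<close> \<open>w' \<in> B q'\<close> unfolding strongly_monotone_op_def by blast
  then have "\<gamma> * \<mu> * (norm (q - q'))\<^sup>2 \<le> inner (q - q') (\<gamma> *\<^sub>R (w - w'))"
    using \<open>0 < \<gamma>\<close> by (simp add: mult.assoc mult_left_mono)
  then have "\<gamma> * \<mu> * (norm (q - q'))\<^sup>2 \<le> inner (q - q') ((p - p') - \<gamma> *\<^sub>R (F p - F p') - (q - q'))"
    unfolding dw .
  moreover have "0 \<le> inner (p - p') (F p - F p')"
    using mono unfolding monotone_op_def by blast
  moreover have "norm (F p - F p') \<le> L * norm (p - p')"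
    using lipschitz_onD[OF lip] by (simp add: dist_norm)
  ultimately have "(norm (\<gamma> *\<^sub>R (F p - F p') + (q - q')))\<^sup>2
      \<le> (1 - 1 / K) * (norm ((p - p') + \<gamma> *\<^sub>R (F p - F p')))\<^sup>2"
    using \<open>0 < \<gamma>\<close> \<open>0 < \<mu>\<close> lipschitz_on_nonneg[OF lip] K
    by (intro douglas_rachford_difference_estimate) auto
  then have "norm (\<gamma> *\<^sub>R (F p - F p') + (q - q')) \<le> sqrt (1 - 1 / K) * norm ((p - p') + \<gamma> *\<^sub>R (F p - F p'))"
    by (metis real_sqrt_abs real_sqrt_le_mono real_sqrt_mult abs_norm_cancel)
  moreover have "\<gamma> *\<^sub>R (F p - F p') + (q - q') = (\<gamma> *\<^sub>R F p + q) - (\<gamma> *\<^sub>R F p' + q')"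
    and "(p - p') + \<gamma> *\<^sub>R (F p - F p') = x - x'"
    unfolding x x' by (simp_all add: algebra_simps)
  ultimately show "norm (douglas_rachford_op \<gamma> (\<lambda>x. {F x}) B x - douglas_rachford_op \<gamma> (\<lambda>x. {F x}) B x')
      \<le> sqrt (1 - 1 / K) * norm (x - x')"
    unfolding Tx Tx' by simp
qed

theorem lemma4p4:
  fixes A1 :: "'a::{real_inner, complete_space} \<Rightarrow> 'a"
    and A2 :: "'a \<Rightarrow> 'a set"
    and L \<mu> a b :: real
  assumes "monotone_op (\<lambda>x. {A1 x})"
    and "L-lipschitz_on UNIV A1"
    and "\<mu> > 0"
    and "maximally_monotone_op A2"
    and "strongly_monotone_op \<mu> A2"
    and "0 < a" and "a \<le> b"
  shows "\<exists>\<beta>. 0 \<le> \<beta> \<and> \<beta> < 1 \<and>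
           (\<forall>\<gamma>\<in>{a..b}. is_contraction \<beta>
              (\<lambda>x. x - resolvent \<gamma> (\<lambda>y. {A1 y}) x
                   + resolvent \<gamma> A2 (2 *\<^sub>R resolvent \<gamma> (\<lambda>y. {A1 y}) x - x)))"
proof -
  define K where "K = (1 + b * L)\<^sup>2 * (2 + 1 / (a * \<mu>))"
  have "0 \<le> L" using assms(2) by (rule lipschitz_on_nonneg)
  have K_bound: "(1 + \<gamma> * L)\<^sup>2 * (2 + 1 / (\<gamma> * \<mu>)) \<le> K" if "\<gamma> \<in> {a..b}" for \<gamma>
    unfolding K_def using that assms \<open>0 \<le> L\<close>
    by (intro mult_mono power_mono add_left_mono divide_left_mono mult_right_mono) auto
  have "1 \<le> (1 + b * L)\<^sup>2" using assms \<open>0 \<le> L\<close> by (simp add: one_le_power)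
  moreover have "2 \<le> 2 + 1 / (a * \<mu>)" using assms by simp
  ultimately have "1 * 2 \<le> K" unfolding K_def by (intro mult_mono) auto
  then have "0 \<le> sqrt (1 - 1 / K)" "sqrt (1 - 1 / K) < 1" by auto
  moreover have "is_contraction (sqrt (1 - 1 / K)) (douglas_rachford_op \<gamma> (\<lambda>y. {A1 y}) A2)"
    if "\<gamma> \<in> {a..b}" for \<gamma>
    using that assms K_bound[OF that] by (intro douglas_rachford_op_contraction) auto
  ultimately show ?thesis unfolding douglas_rachford_op_def[abs_def] by blast
qed

end
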